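(* Let $X$, $Y$ be disjoint sets of cardinality at least two, $M\le\mathrm{Sym}(X)$ and $N\le\mathrm{Sym}(Y)$ nontrivial permutation groups, $T$ the $(|X|,|Y|)$-biregular tree and $c$ a legal colouring. Suppose $v_1,v_2\in V_X$ and $w_1,w_2\in V_Y$, with $\{v_1,w_1\}$ and $\{v_2,w_2\}$ edges of $T$. Then these two edges lie in the same orbit of $U_c(M,N)$ if and only if $v_1,v_2$ lie in the same orbit of $U_c(M,N)$ and $w_1,w_2$ lie in the same orbit of $U_c(M,N)$.
   Context: $T$ has natural bipartition $VT=V_X\sqcup V_Y$ (vertices in $V_X$ have valency $|X|$, in $V_Y$ valency $|Y|$). $A(v)$, $\overline{A}(v)$ are the sets of arcs with origin, resp. terminus, $v$. A legal colouring is a map $c:AT\to X\cup Y$ restricting to a bijection $A(v)\to X$ for $v\in V_X$, to a bijection $A(v)\to Y$ for $v\in V_Y$, and constant on each $\overline{A}(v)$. $U_c(M,N)$ is the group of $g\in\mathrm{Aut}(T)$ with $gV_X=V_X$ and $c|_{A(gv)}\circ g|_{A(v)}\circ(c|_{A(v)})^{-1}$ in $M$ for $v\in V_X$ and in $N$ for $v\in V_Y$. *)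

theory Defs
  imports "HOL-Combinatorics.Permutations"
begin

definition simple_graph :: "('v \<Rightarrow> 'v \<Rightarrow> bool) \<Rightarrow> bool" where
  "simple_graph E \<longleftrightarrow> (\<forall>u v. E u v \<longrightarrow> E v u) \<and> (\<forall>u. \<not> E u u)"

definition is_walk :: "('v \<Rightarrow> 'v \<Rightarrow> bool) \<Rightarrow> 'v list \<Rightarrow> bool" where
  "is_walk E xs \<longleftrightarrow> xs \<noteq> [] \<and> (\<forall>i. Suc i < length xs \<longrightarrow> E (xs ! i) (xs ! Suc i))"

definition connected_graph :: "('v \<Rightarrow> 'v \<Rightarrow> bool) \<Rightarrow> bool" where
  "connected_graph E \<longleftrightarrow> (\<forall>u v. \<exists>xs. is_walk E xs \<and> hd xs = u \<and> last xs = v)"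

definition has_cycle :: "('v \<Rightarrow> 'v \<Rightarrow> bool) \<Rightarrow> bool" where
  "has_cycle E \<longleftrightarrow> (\<exists>xs. is_walk E xs \<and> distinct xs \<and> 3 \<le> length xs \<and> E (last xs) (hd xs))"

definition is_tree :: "('v \<Rightarrow> 'v \<Rightarrow> bool) \<Rightarrow> bool" where
  "is_tree E \<longleftrightarrow> simple_graph E \<and> connected_graph E \<and> \<not> has_cycle E"

definition arcs :: "('v \<Rightarrow> 'v \<Rightarrow> bool) \<Rightarrow> ('v \<times> 'v) set" where
  "arcs E = {(u, w). E u w}"

definition out_arcs :: "('v \<Rightarrow> 'v \<Rightarrow> bool) \<Rightarrow> 'v \<Rightarrow> ('v \<times> 'v) set" where
  "out_arcs E v = {(v, w) | w. E v w}"

definition in_arcs :: "('v \<Rightarrow> 'v \<Rightarrow> bool) \<Rightarrow> 'v \<Rightarrow> ('v \<times> 'v) set" where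
  "in_arcs E v = {(u, v) | u. E u v}"

definition is_aut :: "('v \<Rightarrow> 'v \<Rightarrow> bool) \<Rightarrow> ('v \<Rightarrow> 'v) \<Rightarrow> bool" where
  "is_aut E g \<longleftrightarrow> bij g \<and> (\<forall>u w. E u w \<longleftrightarrow> E (g u) (g w))"

definition arc_map :: "('v \<Rightarrow> 'v) \<Rightarrow> 'v \<times> 'v \<Rightarrow> 'v \<times> 'v" where
  "arc_map g a = (g (fst a), g (snd a))"

definition legal_colouring ::
  "('v \<Rightarrow> 'v \<Rightarrow> bool) \<Rightarrow> 'v set \<Rightarrow> 'v set \<Rightarrow> 'a set \<Rightarrow> 'a set \<Rightarrow> ('v \<times> 'v \<Rightarrow> 'a) \<Rightarrow> bool" where
  "legal_colouring E VX VY X Y c \<longleftrightarrow>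
     (\<forall>v\<in>VX. bij_betw c (out_arcs E v) X) \<and>
     (\<forall>v\<in>VY. bij_betw c (out_arcs E v) Y) \<and>
     (\<forall>v. \<forall>a\<in>in_arcs E v. \<forall>b\<in>in_arcs E v. c a = c b)"

text \<open>The local action c|A(gv) o g|A(v) o (c|A(v))^{-1} as a permutation of the colour set S
  (extended by the identity outside S, the convention of permutes).\<close>
definition local_action ::
  "('v \<Rightarrow> 'v \<Rightarrow> bool) \<Rightarrow> ('v \<times> 'v \<Rightarrow> 'a) \<Rightarrow> 'a set \<Rightarrow> ('v \<Rightarrow> 'v) \<Rightarrow> 'v \<Rightarrow> 'a \<Rightarrow> 'a" where
  "local_action E c S g v = (\<lambda>x. if x \<in> S then c (arc_map g (inv_into (out_arcs E v) c x)) else x)"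

definition U_c ::
  "('v \<Rightarrow> 'v \<Rightarrow> bool) \<Rightarrow> 'v set \<Rightarrow> 'v set \<Rightarrow> 'a set \<Rightarrow> 'a set \<Rightarrow> ('v \<times> 'v \<Rightarrow> 'a)
    \<Rightarrow> ('a \<Rightarrow> 'a) set \<Rightarrow> ('a \<Rightarrow> 'a) set \<Rightarrow> ('v \<Rightarrow> 'v) set" where
  "U_c E VX VY X Y c M N = {g. is_aut E g \<and> g ` VX = VX \<and>
      (\<forall>v\<in>VX. local_action E c X g v \<in> M) \<and>
      (\<forall>v\<in>VY. local_action E c Y g v \<in> N)}"

definition perm_group_on :: "'a set \<Rightarrow> ('a \<Rightarrow> 'a) set \<Rightarrow> bool" where
  "perm_group_on S G \<longleftrightarrow> (\<forall>p\<in>G. p permutes S) \<and> id \<in> G \<and>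
     (\<forall>p\<in>G. \<forall>q\<in>G. p \<circ> q \<in> G) \<and> (\<forall>p\<in>G. inv p \<in> G)"

end

theory Submission
  imports Defs
begin

text \<open>
  Elements of U_c(M,N) preserve the bipartition, so an element mapping the edge {v1,w1} to
  {v2,w2} maps v1 to v2 and w1 to w2. Conversely, let g, h in U_c(M,N) with g v1 = v2 and
  h w1 = w2, and let \<gamma>, \<mu> be their local actions at v1. Since all arcs into w2 have the same
  colour, m = \<mu> \<gamma>\<inverse> in M sends the colour of (v2, g w1) to that of (v2, w2).
  Because T is a tree, every permutation m of X is induced by an automorphism k fixing v2 that
  recolours every arc by m: k u is found by following any walk from v2 to u and, in the image,
  always taking the arc whose colour is the m-image of the colour taken in the walk. A closed
  walk in a tree shrinks to the trivial walk by cancelling backtracks, which do not change the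
  result, so k is well defined. Then k g lies in U_c(M,N) (it multiplies the local actions at
  X-vertices by m and does not change those at Y-vertices) and maps v1 to v2 and w1 to w2.
\<close>

text \<open>walk_from E a xs: a # xs is a walk. Keeping the start vertex apart makes
  concatenation of walks plain list append.\<close>
fun walk_from :: "('v \<Rightarrow> 'v \<Rightarrow> bool) \<Rightarrow> 'v \<Rightarrow> 'v list \<Rightarrow> bool" where
  "walk_from E a [] = True"
| "walk_from E a (x # xs) = (E a x \<and> walk_from E x xs)"

lemma walk_from_append:
  "walk_from E a (ys @ zs) \<longleftrightarrow> walk_from E a ys \<and> walk_from E (last (a # ys)) zs"
  by (induction ys arbitrary: a) auto

lemma is_walk_Cons_Cons: "is_walk E (a # x # xs) \<longleftrightarrow> E a x \<and> is_walk E (x # xs)"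
  unfolding is_walk_def by (auto simp: nth_Cons split: nat.splits)

lemma walk_from_iff_is_walk: "walk_from E a xs \<longleftrightarrow> is_walk E (a # xs)"
  by (induction xs arbitrary: a) (auto simp: is_walk_Cons_Cons, simp add: is_walk_def)

lemma is_aut_adj: "is_aut E g \<Longrightarrow> E u w \<Longrightarrow> E (g u) (g w)"
  unfolding is_aut_def by blast

lemma local_action_arc:
  assumes bij: "bij_betw c (out_arcs E u) S" and "E u w"
  shows "local_action E c S g u (c (u, w)) = c (g u, g w)"
proof -
  have arc: "(u, w) \<in> out_arcs E u" using \<open>E u w\<close> unfolding out_arcs_def by blast
  then have "c (u, w) \<in> S" using bij unfolding bij_betw_def by blast
  moreover have "inv_into (out_arcs E u) c (c (u, w)) = (u, w)"
    using inv_into_f_f[OF bij_betw_imp_inj_on[OF bij] arc] .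
  ultimately show ?thesis unfolding local_action_def arc_map_def by simp
qed

lemma local_action_comp:
  assumes bij: "bij_betw c (out_arcs E u) S" and g: "is_aut E g"
    and k: "\<And>v w. E v w \<Longrightarrow> c (k v, k w) = m (c (v, w))" and "x \<in> S"
  shows "local_action E c S (k \<circ> g) u x = m (local_action E c S g u x)"
proof -
  obtain w where "E u w" "x = c (u, w)"
    using \<open>x \<in> S\<close> bij unfolding bij_betw_def out_arcs_def by blast
  moreover have "E (g u) (g w)" using is_aut_adj[OF g \<open>E u w\<close>] .
  ultimately show ?thesis using local_action_arc[OF bij] k by simp
qed

lemma U_c_preserves_VX:
  assumes "g \<in> U_c E VX VY X Y c M N"
  shows "g u \<in> VX \<longleftrightarrow> u \<in> VX"
proof -
  have "inj g" "g ` VX = VX" using assms unfolding U_c_def is_aut_def bij_def by auto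
  then show ?thesis by (metis inj_image_mem_iff)
qed

lemma U_c_image_edge_iff:
  assumes g: "g \<in> U_c E VX VY X Y c M N" and "VX \<inter> VY = {}"
    and "v1 \<in> VX" "v2 \<in> VX" "w1 \<in> VY" "w2 \<in> VY"
  shows "g ` {v1, w1} = {v2, w2} \<longleftrightarrow> g v1 = v2 \<and> g w1 = w2"
proof
  assume image: "g ` {v1, w1} = {v2, w2}"
  have "g v1 \<in> VX" "g w1 \<notin> VX" using U_c_preserves_VX[OF g] assms(2-6) by auto
  then show "g v1 = v2 \<and> g w1 = w2" using image assms(2-6) by auto
qed simp

locale tree =
  fixes E :: "'v \<Rightarrow> 'v \<Rightarrow> bool"
  assumes is_tree: "is_tree E"
begin

lemma adj_sym: "E u w \<Longrightarrow> E w u"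
  using is_tree unfolding is_tree_def simple_graph_def by blast

lemma adj_irrefl: "\<not> E u u"
  using is_tree unfolding is_tree_def simple_graph_def by blast

lemma walk_from_exists: "\<exists>p. walk_from E a p \<and> last (a # p) = u"
proof -
  obtain xs where xs: "is_walk E xs" "hd xs = a" "last xs = u"
    using is_tree unfolding is_tree_def connected_graph_def by blast
  then have "xs = a # tl xs" unfolding is_walk_def by (metis list.collapse)
  then show ?thesis using xs walk_from_iff_is_walk by metis
qed

lemma walk_from_rev:
  "walk_from E a xs \<Longrightarrow> walk_from E (last (a # xs)) (rev (butlast (a # xs)))"
proof (induction xs rule: rev_induct)
  case (snoc y ys)
  then have "walk_from E y (rev (a # ys))"
    by (cases ys rule: rev_cases) (auto simp: walk_from_append adj_sym)
  then show ?case by (simp add: butlast_append)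
qed simp

text \<open>A shortest repetition in a walk without backtracking would be a cycle.\<close>
lemma non_backtracking_walk_distinct:
  assumes walk: "is_walk E L" and no_bt: "\<And>i. i + 2 < length L \<Longrightarrow> L ! i \<noteq> L ! (i + 2)"
  shows "distinct L"
proof (rule ccontr)
  let ?rep = "\<lambda>d. \<exists>i. 0 < d \<and> i + d < length L \<and> L ! i = L ! (i + d)"
  assume "\<not> distinct L"
  then obtain i j where "i < j" "j < length L" "L ! i = L ! j"
    by (metis distinct_conv_nth linorder_neqE_nat)
  then have "?rep (j - i)" by (metis add_diff_inverse_nat less_imp_not_less zero_less_diff)
  define d where "d = (LEAST d. ?rep d)"
  obtain i where i: "0 < d" "i + d < length L" "L ! i = L ! (i + d)"
    using LeastI_ex[of ?rep] \<open>?rep (j - i)\<close> d_def by blast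
  have minimal: "\<not> ?rep d'" if "d' < d" for d'
    using not_less_Least[of d' ?rep] that d_def by blast
  have adj: "E (L ! t) (L ! Suc t)" if "Suc t < length L" for t
    using walk that unfolding is_walk_def by blast
  have "d \<noteq> 1" using adj[of i] i adj_irrefl by auto
  moreover have "d \<noteq> 2" using no_bt i by auto
  ultimately have d3: "3 \<le> d" using i by linarith
  define C where "C = take d (drop i L)"
  have len: "length C = d" and nth: "\<And>t. t < d \<Longrightarrow> C ! t = L ! (i + t)"
    using i unfolding C_def by auto
  have "distinct C"
    unfolding distinct_conv_nth
  proof (intro allI impI)
    have "C ! s \<noteq> C ! t" if "s < t" "t < d" for s t
    proof
      assume "C ! s = C ! t"
      then have "L ! (i + s) = L ! (i + s + (t - s))" using that nth by simp
      moreover have "i + s + (t - s) < length L" using that i(2) by simp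
      moreover have "0 < t - s" "t - s < d" using that by auto
      ultimately show False using minimal[of "t - s"] by blast
    qed
    then show "C ! s \<noteq> C ! t" if "s < length C" "t < length C" "s \<noteq> t" for s t
      using that len by (metis linorder_neqE_nat)
  qed
  moreover have "is_walk E C"
    unfolding is_walk_def using len nth adj i d3 by auto
  moreover have "E (last C) (hd C)"
  proof -
    have "C \<noteq> []" using len d3 by auto
    then show ?thesis using adj[of "i + (d - 1)"] i d3 len nth[of 0] nth[of "d - 1"]
      by (simp add: last_conv_nth hd_conv_nth)
  qed
  ultimately have "has_cycle E" unfolding has_cycle_def using len d3 by blast
  then show False using is_tree unfolding is_tree_def by blast
qed

lemma closed_walk_backtracks:
  assumes walk: "walk_from E a xs" and "xs \<noteq> []" and closed: "last xs = a"
  shows "\<exists>ys x zs. xs = ys @ x # last (a # ys) # zs"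
proof -
  have "\<not> distinct (a # xs)" using assms last_in_set by fastforce
  moreover have "is_walk E (a # xs)" using walk by (simp only: walk_from_iff_is_walk)
  ultimately obtain i where i: "i + 2 < length (a # xs)" "(a # xs) ! i = (a # xs) ! (i + 2)"
    using non_backtracking_walk_distinct[of "a # xs"] by blast
  have "xs = take i xs @ xs ! i # xs ! Suc i # drop (Suc (Suc i)) xs"
    using i(1) by (simp add: Cons_nth_drop_Suc)
  moreover have "last (a # take i xs) = (a # xs) ! i"
  proof -
    have "a # take i xs = take (Suc i) (a # xs)" by simp
    also have "\<dots> = take i (a # xs) @ [(a # xs) ! i]"
      using i(1) by (simp only: take_Suc_conv_app_nth)
    finally show ?thesis by simp
  qed
  ultimately show ?thesis using i(2) by (metis add_2_eq_Suc' nth_Cons_Suc)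
qed

end

locale legally_coloured_tree = tree E
  for E :: "'v \<Rightarrow> 'v \<Rightarrow> bool" +
  fixes VX VY :: "'v set" and X Y :: "'a set" and c :: "'v \<times> 'v \<Rightarrow> 'a"
  assumes colours_disjoint: "X \<inter> Y = {}"
    and parts_disjoint: "VX \<inter> VY = {}" and parts_cover: "VX \<union> VY = UNIV"
    and bipartite: "\<And>u w. E u w \<Longrightarrow> (u \<in> VX \<and> w \<in> VY) \<or> (u \<in> VY \<and> w \<in> VX)"
    and legal: "legal_colouring E VX VY X Y c"
begin

definition colours :: "'v \<Rightarrow> 'a set" where
  "colours u = (if u \<in> VX then X else Y)"

lemma bij_betw_out_arcs: "bij_betw c (out_arcs E u) (colours u)"
  using legal parts_cover unfolding legal_colouring_def colours_def by auto

lemma arc_colour_in: "E u w \<Longrightarrow> c (u, w) \<in> colours u"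
  using bij_betw_out_arcs[of u] unfolding bij_betw_def out_arcs_def by auto

lemma arc_colour_inj: "E u w \<Longrightarrow> E u w' \<Longrightarrow> c (u, w) = c (u, w') \<Longrightarrow> w = w'"
  using bij_betw_imp_inj_on[OF bij_betw_out_arcs[of u]] unfolding inj_on_def out_arcs_def by auto

lemma in_arc_colour_eq: "E u w \<Longrightarrow> E u' w \<Longrightarrow> c (u', w) = c (u, w)"
  using legal unfolding legal_colouring_def in_arcs_def by blast

lemma adj_part_iff: "E u w \<Longrightarrow> w \<in> VX \<longleftrightarrow> u \<notin> VX"
  using bipartite[of u w] parts_disjoint by blast

definition neighbour :: "'v \<Rightarrow> 'a \<Rightarrow> 'v" where
  "neighbour u x = (SOME w. E u w \<and> c (u, w) = x)"

lemma neighbour: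
  assumes "x \<in> colours u" shows "E u (neighbour u x)" "c (u, neighbour u x) = x"
proof -
  have "x \<in> c ` out_arcs E u" using assms bij_betw_out_arcs[of u] unfolding bij_betw_def by simp
  then have "\<exists>w. E u w \<and> c (u, w) = x" unfolding out_arcs_def by blast
  then show "E u (neighbour u x)" "c (u, neighbour u x) = x"
    unfolding neighbour_def by (metis (mono_tags, lifting) someI_ex)+
qed

lemma neighbour_arc_colour: "E u w \<Longrightarrow> neighbour u (c (u, w)) = w"
  using neighbour arc_colour_in arc_colour_inj by blast

lemma permutes_colours:
  assumes m: "m permutes X" and x: "x \<in> colours u"
  shows "m x \<in> colours u"
proof (cases "u \<in> VX")
  case True
  then show ?thesis using x permutes_in_image[OF m] by (simp add: colours_def)
next
  case False
  then have "x \<notin> X" using x colours_disjoint by (auto simp: colours_def)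
  then show ?thesis using x permutes_not_in[OF m] by simp
qed

text \<open>(a, b) is matched if b can be the image of a under an automorphism that acts on arc
  colours by m: same part, and the colour of the arcs into b is m of that into a.\<close>
fun matched :: "('a \<Rightarrow> 'a) \<Rightarrow> 'v \<times> 'v \<Rightarrow> bool" where
  "matched m (a, b) \<longleftrightarrow> (a \<in> VX \<longleftrightarrow> b \<in> VX) \<and>
     (\<forall>u u'. E u a \<longrightarrow> E u' b \<longrightarrow> c (u', b) = m (c (u, a)))"

fun transport_step :: "('a \<Rightarrow> 'a) \<Rightarrow> 'v \<times> 'v \<Rightarrow> 'v \<Rightarrow> 'v \<times> 'v" where
  "transport_step m (a, b) x = (x, neighbour b (m (c (a, x))))"

abbreviation transport :: "('a \<Rightarrow> 'a) \<Rightarrow> 'v \<times> 'v \<Rightarrow> 'v list \<Rightarrow> 'v \<times> 'v" where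
  "transport m \<equiv> foldl (transport_step m)"

lemma transport_step_arc:
  assumes m: "m permutes X" and matched: "matched m (a, b)" and "E a x"
  defines "b' \<equiv> neighbour b (m (c (a, x)))"
  shows "E b b'" "c (b, b') = m (c (a, x))" "matched m (x, b')"
proof -
  have "colours a = colours b" using matched unfolding colours_def by simp
  then have "m (c (a, x)) \<in> colours b" using permutes_colours[OF m arc_colour_in[OF \<open>E a x\<close>]] by simp
  then show b': "E b b'" "c (b, b') = m (c (a, x))" using neighbour unfolding b'_def by auto
  show "matched m (x, b')"
  proof (simp only: matched.simps, intro conjI allI impI)
    show "x \<in> VX \<longleftrightarrow> b' \<in> VX"
      using adj_part_iff[OF b'(1)] adj_part_iff[OF \<open>E a x\<close>] matched by simp
    fix u u' assume "E u x" "E u' b'"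
    then show "c (u', b') = m (c (u, x))"
      using in_arc_colour_eq[OF b'(1)] in_arc_colour_eq[OF \<open>E a x\<close>] b'(2) by simp
  qed
qed

lemma transport_step_back:
  assumes m: "m permutes X" and matched: "matched m (a, b)" and "E a x"
  shows "transport_step m (transport_step m (a, b) x) a = (a, b)"
proof -
  define b' where "b' = neighbour b (m (c (a, x)))"
  have "E b b'" using transport_step_arc[OF assms] b'_def by simp
  then have "c (b', b) = m (c (x, a))" using matched \<open>E a x\<close> adj_sym by simp
  then have "neighbour b' (m (c (x, a))) = b"
    using neighbour_arc_colour[OF adj_sym[OF \<open>E b b'\<close>]] by simp
  then show ?thesis by (simp add: b'_def)
qed

lemma transport_matched:
  "m permutes X \<Longrightarrow> matched m s \<Longrightarrow> walk_from E (fst s) xs \<Longrightarrow>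
     matched m (transport m s xs) \<and> fst (transport m s xs) = last (fst s # xs)"
proof (induction xs arbitrary: s)
  case (Cons x xs)
  obtain a b where s: "s = (a, b)" by fastforce
  then have "E a x" and walk: "walk_from E x xs" using Cons.prems(3) by simp_all
  moreover have "matched m (a, b)" using Cons.prems(2) s by simp
  ultimately have "matched m (transport_step m s x)"
    using transport_step_arc(3)[OF Cons.prems(1)] s by (simp del: matched.simps)
  moreover have "fst (transport_step m s x) = x" using s by simp
  ultimately show ?case using Cons.IH Cons.prems(1) walk by simp
qed simp

lemma transport_closed_walk:
  assumes m: "m permutes X"
  shows "matched m s \<Longrightarrow> walk_from E (fst s) xs \<Longrightarrow> last (fst s # xs) = fst s \<Longrightarrow>
    transport m s xs = s"
proof (induction "length xs" arbitrary: xs rule: less_induct)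
  case less
  show ?case
  proof (cases "xs = []")
    case False
    obtain a b where s: "s = (a, b)" by fastforce
    have "last xs = a" using less.prems False s by simp
    then obtain ys x zs where xs: "xs = ys @ x # last (a # ys) # zs"
      using closed_walk_backtracks less.prems(2) False s by fastforce
    define u where "u = last (a # ys)"
    have walk_ys: "walk_from E a ys" and "E u x" and walk_zs: "walk_from E u zs"
      using less.prems(2) xs s u_def by (auto simp: walk_from_append)
    have "matched m (transport m s ys)" "fst (transport m s ys) = u"
      using transport_matched[OF m less.prems(1)] walk_ys s u_def by simp_all
    then have undo: "transport_step m (transport_step m (transport m s ys) x) u = transport m s ys"
      using transport_step_back[OF m] \<open>E u x\<close> by (metis prod.collapse)
    have "transport m s xs = transport m s (ys @ zs)"
      using xs u_def undo by simp
    also have "\<dots> = s"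
    proof (rule less.hyps)
      show "length (ys @ zs) < length xs" using xs by simp
      show "walk_from E (fst s) (ys @ zs)" using walk_ys walk_zs s u_def by (simp add: walk_from_append)
      show "last (fst s # ys @ zs) = fst s"
        using less.prems(3) xs s u_def by (cases zs) auto
    qed fact
    finally show ?thesis .
  qed simp
qed

lemma transport_endpoint_unique:
  assumes m: "m permutes X" and matched: "matched m (a, b)"
    and p: "walk_from E a p" and q: "walk_from E a q" and endpoints: "last (a # p) = last (a # q)"
  shows "transport m (a, b) p = transport m (a, b) q"
proof -
  define u where "u = last (a # q)"
  define qrev where "qrev = rev (butlast (a # q))"
  have walk_qrev: "walk_from E u qrev" using walk_from_rev[OF q] u_def qrev_def by simp
  have last_qrev: "last (u # qrev) = a"
    using u_def qrev_def by (cases q rule: rev_cases) (auto simp: last_rev)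
  have pq: "matched m (transport m (a, b) p)" "fst (transport m (a, b) p) = u"
    using transport_matched[OF m matched] p endpoints u_def by simp_all
  have "last (a # p @ qrev) = a"
    using endpoints last_qrev u_def by (cases qrev) simp_all
  then have "transport m (a, b) (p @ qrev) = (a, b)"
    using transport_closed_walk[OF m matched, of "p @ qrev"] p walk_qrev endpoints u_def
    by (simp add: walk_from_append)
  moreover have "last (u # qrev @ q) = u"
    using last_qrev u_def by (cases q) simp_all
  then have "transport m (transport m (a, b) p) (qrev @ q) = transport m (a, b) p"
    using transport_closed_walk[OF m pq(1), of "qrev @ q"] pq(2) walk_qrev last_qrev q
    by (simp add: walk_from_append)
  ultimately show ?thesis by (metis foldl_append append_assoc)
qed

text \<open>The image of u under the automorphism recolouring by m and sending a to b; by
  transport_endpoint_unique the chosen walk from a to u is irrelevant.\<close>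
definition colour_aut :: "('a \<Rightarrow> 'a) \<Rightarrow> 'v \<Rightarrow> 'v \<Rightarrow> 'v \<Rightarrow> 'v" where
  "colour_aut m a b u = snd (transport m (a, b) (SOME p. walk_from E a p \<and> last (a # p) = u))"

context
  fixes m a b
  assumes m: "m permutes X" and matched: "matched m (a, b)"
begin

lemma colour_aut_walk:
  assumes "walk_from E a p"
  shows "colour_aut m a b (last (a # p)) = snd (transport m (a, b) p)"
proof -
  let ?q = "SOME q. walk_from E a q \<and> last (a # q) = last (a # p)"
  have "walk_from E a ?q \<and> last (a # ?q) = last (a # p)"
    by (rule someI[of _ p]) (simp add: assms)
  then show ?thesis
    unfolding colour_aut_def using transport_endpoint_unique[OF m matched] assms by metis
qed

lemma colour_aut_start: "colour_aut m a b a = b"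
  using colour_aut_walk[of "[]"] by simp

lemma colour_aut_matched: "matched m (u, colour_aut m a b u)"
proof -
  obtain p where p: "walk_from E a p" "last (a # p) = u" using walk_from_exists by blast
  then show ?thesis
    using transport_matched[OF m matched] colour_aut_walk[OF p(1)] by (metis fst_conv prod.collapse)
qed

lemma colour_aut_arc:
  assumes "E u w"
  shows "E (colour_aut m a b u) (colour_aut m a b w)"
    and "c (colour_aut m a b u, colour_aut m a b w) = m (c (u, w))"
proof -
  obtain p where p: "walk_from E a p" "last (a # p) = u" using walk_from_exists by blast
  obtain b' where b': "transport m (a, b) p = (u, b')" "matched m (u, b')"
    using transport_matched[OF m matched] p by (metis fst_conv prod.collapse)
  have "walk_from E a (p @ [w])" using p assms by (simp add: walk_from_append)
  then have "colour_aut m a b w = neighbour b' (m (c (u, w)))"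
    using colour_aut_walk[of "p @ [w]"] b'(1) by simp
  moreover have "colour_aut m a b u = b'" using colour_aut_walk[OF p(1)] p(2) b'(1) by simp
  ultimately show "E (colour_aut m a b u) (colour_aut m a b w)"
    and "c (colour_aut m a b u, colour_aut m a b w) = m (c (u, w))"
    using transport_step_arc[OF m b'(2) assms] by simp_all
qed

end

lemma matched_inv:
  assumes m: "m permutes X" and "matched m (a, b)"
  shows "matched (inv m) (b, a)"
  using assms permutes_inverses(2)[OF m] by auto

lemma colour_aut_inverse:
  assumes m: "m permutes X" and matched: "matched m (a, b)"
  shows "colour_aut (inv m) b a (colour_aut m a b u) = u"
proof -
  let ?k = "colour_aut m a b" and ?k' = "colour_aut (inv m) b a"
  note m' = permutes_inv[OF m] and matched' = matched_inv[OF m matched]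
  obtain p where p: "walk_from E a p" "last (a # p) = u" using walk_from_exists by blast
  have "?k' (?k (last (a # p))) = last (a # p)"
    using p(1)
  proof (induction p rule: rev_induct)
    case Nil
    show ?case using colour_aut_start[OF m matched] colour_aut_start[OF m' matched'] by simp
  next
    case (snoc w p)
    let ?u = "last (a # p)"
    have "E ?u w" "walk_from E a p" using snoc.prems by (simp_all add: walk_from_append)
    then have "E ?u (?k' (?k w))" "c (?u, ?k' (?k w)) = c (?u, w)"
      using colour_aut_arc[OF m matched \<open>E ?u w\<close>] snoc.IH
        colour_aut_arc[OF m' matched', of "?k ?u" "?k w"] permutes_inverses(2)[OF m] by simp_all
    then show ?case using arc_colour_inj \<open>E ?u w\<close> by simp
  qed
  then show ?thesis using p(2) by simp
qed

lemma colour_aut_is_aut: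
  assumes m: "m permutes X" and matched: "matched m (a, b)"
  shows "is_aut E (colour_aut m a b)" and "colour_aut m a b ` VX = VX"
proof -
  let ?k = "colour_aut m a b" and ?k' = "colour_aut (inv m) b a"
  have left: "?k' (?k u) = u" for u using colour_aut_inverse[OF m matched] .
  have right: "?k (?k' u) = u" for u
    using colour_aut_inverse[OF permutes_inv[OF m] matched_inv[OF m matched]]
    by (simp add: permutes_inv_inv[OF m])
  have "E u w \<longleftrightarrow> E (?k u) (?k w)" for u w
    using colour_aut_arc(1)[OF m matched, of u w]
      colour_aut_arc(1)[OF permutes_inv[OF m] matched_inv[OF m matched], of "?k u" "?k w"] left
    by auto
  moreover have "bij ?k" using left right by (metis bij_betw_byWitness subset_UNIV)
  ultimately show "is_aut E ?k" unfolding is_aut_def by blast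
  have "?k u \<in> VX \<longleftrightarrow> u \<in> VX" for u using colour_aut_matched[OF m matched, of u] by simp
  then show "?k ` VX = VX" using right by (metis image_eqI subsetI subset_antisym image_subsetI)
qed

lemma matched_refl:
  assumes m: "m permutes X" and "v \<in> VX"
  shows "matched m (v, v)"
proof -
  have "c (u, v) \<notin> X" if "E u v" for u
    using arc_colour_in[OF that] adj_part_iff[OF that] \<open>v \<in> VX\<close> colours_disjoint
    by (auto simp: colours_def)
  then have "c (u', v) = m (c (u, v))" if "E u v" "E u' v" for u u'
    using that in_arc_colour_eq permutes_not_in[OF m] by metis
  then show ?thesis unfolding matched.simps by blast
qed

lemma local_action_colour_aut_comp_VX:
  assumes m: "m permutes X" and matched: "matched m (a, b)" and g: "is_aut E g" and "u \<in> VX"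
  shows "local_action E c X (colour_aut m a b \<circ> g) u = m \<circ> local_action E c X g u"
proof
  fix x
  have bij: "bij_betw c (out_arcs E u) X"
    using bij_betw_out_arcs[of u] \<open>u \<in> VX\<close> by (simp add: colours_def)
  show "local_action E c X (colour_aut m a b \<circ> g) u x = (m \<circ> local_action E c X g u) x"
  proof (cases "x \<in> X")
    case True
    show ?thesis
      using local_action_comp[where k = "colour_aut m a b", OF bij g
          colour_aut_arc(2)[OF m matched] True] by simp
  qed (simp add: local_action_def permutes_not_in[OF m])
qed

lemma local_action_colour_aut_comp_VY:
  assumes m: "m permutes X" and matched: "matched m (a, b)" and g: "is_aut E g"
    and "u \<notin> VX" and "g u \<notin> VX"
  shows "local_action E c Y (colour_aut m a b \<circ> g) u = local_action E c Y g u"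
proof
  fix y
  have bij: "bij_betw c (out_arcs E u) Y"
    using bij_betw_out_arcs[of u] \<open>u \<notin> VX\<close> by (simp add: colours_def)
  show "local_action E c Y (colour_aut m a b \<circ> g) u y = local_action E c Y g u y"
  proof (cases "y \<in> Y")
    case True
    then obtain w where w: "E u w" "y = c (u, w)"
      using bij unfolding bij_betw_def out_arcs_def by auto
    then have "E (g u) (g w)" using is_aut_adj[OF g] by blast
    then have "local_action E c Y g u y \<notin> X"
      using local_action_arc[OF bij w(1)] w(2) arc_colour_in[of "g u" "g w"] \<open>g u \<notin> VX\<close>
        colours_disjoint by (auto simp: colours_def)
    then show ?thesis
      using local_action_comp[where k = "colour_aut m a b", OF bij g colour_aut_arc(2)[OF m matched] True]
        permutes_not_in[OF m] by simp
  qed (simp add: local_action_def)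
qed

lemma colour_aut_comp_U_c:
  assumes M: "perm_group_on X M" and "m \<in> M" and "v \<in> VX" and g: "g \<in> U_c E VX VY X Y c M N"
  shows "colour_aut m v v \<circ> g \<in> U_c E VX VY X Y c M N"
proof -
  let ?k = "colour_aut m v v"
  have m: "m permutes X" using M \<open>m \<in> M\<close> unfolding perm_group_on_def by blast
  note matched = matched_refl[OF m \<open>v \<in> VX\<close>]
  have g_aut: "is_aut E g" and "g ` VX = VX" using g unfolding U_c_def by blast+
  have "is_aut E (?k \<circ> g)"
    using colour_aut_is_aut(1)[OF m matched] g_aut unfolding is_aut_def by (metis bij_comp comp_apply)
  moreover have "(?k \<circ> g) ` VX = VX"
    using colour_aut_is_aut(2)[OF m matched] \<open>g ` VX = VX\<close> by (simp only: image_comp[symmetric])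
  moreover have "local_action E c X (?k \<circ> g) u \<in> M" if "u \<in> VX" for u
    using local_action_colour_aut_comp_VX[OF m matched g_aut that] M \<open>m \<in> M\<close> g that
    unfolding perm_group_on_def U_c_def by auto
  moreover have "local_action E c Y (?k \<circ> g) u \<in> N" if "u \<in> VY" for u
  proof -
    have "u \<notin> VX" "g u \<notin> VX" using that parts_disjoint U_c_preserves_VX[OF g] by auto
    then show ?thesis
      using local_action_colour_aut_comp_VY[OF m matched g_aut] g that unfolding U_c_def by auto
  qed
  ultimately show ?thesis unfolding U_c_def by blast
qed

lemma edge_orbit_if_vertex_orbits:
  assumes M: "perm_group_on X M" and "v1 \<in> VX" and "E v1 w1" and "E v2 w2"
    and g: "g \<in> U_c E VX VY X Y c M N" "g v1 = v2"
    and h: "h \<in> U_c E VX VY X Y c M N" "h w1 = w2"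
  shows "\<exists>f\<in>U_c E VX VY X Y c M N. f v1 = v2 \<and> f w1 = w2"
proof -
  have bij: "bij_betw c (out_arcs E v1) X"
    using bij_betw_out_arcs[of v1] \<open>v1 \<in> VX\<close> by (simp add: colours_def)
  have "v2 \<in> VX" using U_c_preserves_VX[OF g(1), of v1] g(2) \<open>v1 \<in> VX\<close> by simp
  define \<gamma> where "\<gamma> = local_action E c X g v1"
  define \<mu> where "\<mu> = local_action E c X h v1"
  have "\<gamma> \<in> M" "\<mu> \<in> M" using g(1) h(1) \<open>v1 \<in> VX\<close> unfolding U_c_def \<gamma>_def \<mu>_def by blast+
  then have \<gamma>: "\<gamma> permutes X" and m: "\<mu> \<circ> inv \<gamma> \<in> M" using M unfolding perm_group_on_def by blast+
  have "is_aut E g" "is_aut E h" using g(1) h(1) unfolding U_c_def by blast+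
  have "E (h v1) w2" using is_aut_adj[OF \<open>is_aut E h\<close> \<open>E v1 w1\<close>] h(2) by simp
  then have "\<mu> (c (v1, w1)) = c (v2, w2)"
    using local_action_arc[OF bij \<open>E v1 w1\<close>] h(2) in_arc_colour_eq[OF \<open>E v2 w2\<close>] \<mu>_def by simp
  moreover have "\<gamma> (c (v1, w1)) = c (v2, g w1)"
    using local_action_arc[OF bij \<open>E v1 w1\<close>] g(2) \<gamma>_def by simp
  ultimately have colour: "(\<mu> \<circ> inv \<gamma>) (c (v2, g w1)) = c (v2, w2)"
    by (metis comp_apply permutes_inverses(2)[OF \<gamma>])
  let ?k = "colour_aut (\<mu> \<circ> inv \<gamma>) v2 v2"
  have perm: "\<mu> \<circ> inv \<gamma> permutes X" using M m unfolding perm_group_on_def by blast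
  note matched = matched_refl[OF perm \<open>v2 \<in> VX\<close>]
  have start: "?k v2 = v2" using colour_aut_start[OF perm matched] .
  have "E v2 (g w1)" using is_aut_adj[OF \<open>is_aut E g\<close> \<open>E v1 w1\<close>] g(2) by simp
  then have "E v2 (?k (g w1))" "c (v2, ?k (g w1)) = c (v2, w2)"
    using colour_aut_arc[OF perm matched \<open>E v2 (g w1)\<close>] start colour by simp_all
  then have "(?k \<circ> g) w1 = w2" using arc_colour_inj \<open>E v2 w2\<close> by simp
  moreover have "(?k \<circ> g) v1 = v2" using start g(2) by simp
  ultimately show ?thesis using colour_aut_comp_U_c[OF M m \<open>v2 \<in> VX\<close> g(1)] by blast
qed

end

theorem lemma3p10:
  fixes E :: "'v \<Rightarrow> 'v \<Rightarrow> bool" and VX VY :: "'v set"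
    and X Y :: "'a set" and c :: "'v \<times> 'v \<Rightarrow> 'a"
    and M N :: "('a \<Rightarrow> 'a) set" and v1 v2 w1 w2 :: 'v
  assumes "X \<inter> Y = {}"
    and "\<exists>a b. a \<in> X \<and> b \<in> X \<and> a \<noteq> b"
    and "\<exists>a b. a \<in> Y \<and> b \<in> Y \<and> a \<noteq> b"
    and "perm_group_on X M" and "M \<noteq> {id}"
    and "perm_group_on Y N" and "N \<noteq> {id}"
    and "is_tree E"
    and "VX \<inter> VY = {}" and "VX \<union> VY = UNIV"
    and "\<forall>u w. E u w \<longrightarrow> (u \<in> VX \<and> w \<in> VY) \<or> (u \<in> VY \<and> w \<in> VX)"
    and "legal_colouring E VX VY X Y c"
    and "v1 \<in> VX" and "v2 \<in> VX" and "w1 \<in> VY" and "w2 \<in> VY"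
    and "E v1 w1" and "E v2 w2"
  shows "(\<exists>g\<in>U_c E VX VY X Y c M N. g ` {v1, w1} = {v2, w2}) \<longleftrightarrow>
         ((\<exists>g\<in>U_c E VX VY X Y c M N. g v1 = v2) \<and> (\<exists>g\<in>U_c E VX VY X Y c M N. g w1 = w2))"
proof -
  interpret legally_coloured_tree E VX VY X Y c
    using assms by unfold_locales auto
  let ?U = "U_c E VX VY X Y c M N"
  note edge_iff = U_c_image_edge_iff[OF _ \<open>VX \<inter> VY = {}\<close> \<open>v1 \<in> VX\<close> \<open>v2 \<in> VX\<close> \<open>w1 \<in> VY\<close> \<open>w2 \<in> VY\<close>]
  show ?thesis
  proof
    assume "\<exists>g\<in>?U. g ` {v1, w1} = {v2, w2}"
    then obtain g where "g \<in> ?U" "g ` {v1, w1} = {v2, w2}" by blast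
    then show "(\<exists>g\<in>?U. g v1 = v2) \<and> (\<exists>g\<in>?U. g w1 = w2)" using edge_iff[of g] by blast
  next
    assume "(\<exists>g\<in>?U. g v1 = v2) \<and> (\<exists>g\<in>?U. g w1 = w2)"
    then obtain g h where "g \<in> ?U" "g v1 = v2" "h \<in> ?U" "h w1 = w2" by blast
    then obtain f where "f \<in> ?U" "f v1 = v2" "f w1 = w2"
      using edge_orbit_if_vertex_orbits[OF \<open>perm_group_on X M\<close> \<open>v1 \<in> VX\<close> \<open>E v1 w1\<close> \<open>E v2 w2\<close>]
      by blast
    then show "\<exists>g\<in>?U. g ` {v1, w1} = {v2, w2}" using edge_iff[of f] by blast
  qed
qed

end
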